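(* For $n=1,2,\dots$ let $\varphi_*^{(n)}(x):=\varphi^{(n)}(x)-\frac12$, $x\in[0,1]$, and let $E[X]:=\int_0^1X(x)\,dx$. Then for any positive integers $i<j$, $$E\big[(\varphi_*^{(i)})^2(\varphi_*^{(j)})^2\big]-E\big[(\varphi_*^{(i)})^2\big]E\big[(\varphi_*^{(j)})^2\big]=\frac1{180}\cdot\frac1{4^{j-i}}.$$
   Context: The tent map on $[0,1]$ is $\varphi(x)=2x$ for $x\in[0,1/2]$ and $\varphi(x)=2(1-x)$ for $x\in[1/2,1]$; it is extended to $\mathbb{R}$ by $\varphi(x):=\varphi(x-[x])$, and $\varphi^{(n)}$ denotes the $n$-fold iterate of $\varphi$, so that $\varphi^{(n)}(x)=\varphi(2^{n-1}x)$. *)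

theory Defs
  imports "HOL-Analysis.Analysis"
begin

definition tent :: "real \<Rightarrow> real" where
  "tent x = (let y = frac x in if y \<le> 1/2 then 2 * y else 2 * (1 - y))"

definition tent_iter :: "nat \<Rightarrow> real \<Rightarrow> real" where
  "tent_iter n = tent ^^ n"

definition tent_c :: "nat \<Rightarrow> real \<Rightarrow> real" where
  "tent_c n x = tent_iter n x - 1/2"

definition Ex :: "(real \<Rightarrow> real) \<Rightarrow> real" where
  "Ex X = integral {0..1} X"

end

theory Submission
  imports Defs
begin

text \<open>
  The tent map \<phi> preserves Lebesgue measure on [0,1], and its transfer operator
  (P q)(y) = (q(y/2) + q(1 - y/2))/2, characterised by \<integral> q (F \<circ> \<phi>) = \<integral> (P q) F, maps the
  quadratic p = a x^2 + b x + c to a quadratic with leading coefficient a/4 and the same integral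
  a/3 + b/2 + c.  Since \<integral> p(x) (x - 1/2)^2 dx = (\<integral> p)/12 + a/180, induction on k gives
  \<integral> p(x) (\<phi>^(k)(x) - 1/2)^2 dx = (\<integral> p)/12 + a/(180 4^k).  By invariance the mixed moment is
  \<integral> (x - 1/2)^2 (\<phi>^(j-i)(x) - 1/2)^2 dx = 1/144 + 1/(180 4^(j-i)), the case p = (x - 1/2)^2,
  while every second moment is the case p = 1, namely 1/12.
\<close>

lemma tent_eq_double: "0 \<le> x \<Longrightarrow> x \<le> 1/2 \<Longrightarrow> tent x = 2 * x"
  by (simp add: tent_def frac_eq)

lemma tent_eq_reflected_double: "1/2 \<le> x \<Longrightarrow> x \<le> 1 \<Longrightarrow> tent x = 2 - 2 * x"
  by (cases "x = 1") (auto simp: tent_def frac_eq)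

lemma tent_in_unit_interval: "x \<in> {0..1} \<Longrightarrow> tent x \<in> {0..1}"
  by (cases "x \<le> 1/2") (auto simp: tent_eq_double tent_eq_reflected_double)

lemma funpow_tent_in_unit_interval: "x \<in> {0..1} \<Longrightarrow> (tent ^^ n) x \<in> {0..1}"
  by (induction n) (use tent_in_unit_interval in auto)

lemma continuous_on_tent: "continuous_on {0..1} tent"
proof -
  have "continuous_on {0..1/2} tent"
    by (rule continuous_on_eq[of _ "\<lambda>x. 2 * x"])
       (auto intro!: continuous_intros simp: tent_eq_double)
  moreover have "continuous_on {1/2..1} tent"
    by (rule continuous_on_eq[of _ "\<lambda>x. 2 - 2 * x"])
       (auto intro!: continuous_intros simp: tent_eq_reflected_double)
  moreover have "{0..1::real} = {0..1/2} \<union> {1/2..1}"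
    by auto
  ultimately show ?thesis
    by (metis closed_atLeastAtMost continuous_on_closed_Un)
qed

lemma continuous_on_funpow_tent: "continuous_on {0..1} (tent ^^ n)"
proof (induction n)
  case (Suc n)
  have "continuous_on {0..1} (tent \<circ> (tent ^^ n))"
    by (rule continuous_on_compose[OF Suc continuous_on_subset[OF continuous_on_tent]])
       (auto intro: funpow_tent_in_unit_interval)
  then show ?case
    by simp
qed simp

lemma has_integral_comp_double:
  fixes G :: "real \<Rightarrow> 'a::real_normed_vector"
  assumes "(G has_integral I) {0..1}"
  shows "((\<lambda>x. G (2 * x)) has_integral I /\<^sub>R 2) {0..1/2}"
  using has_integral_affinity'[of G I 0 1 2 0] assms by simp

lemma has_integral_comp_reflected_double:
  fixes G :: "real \<Rightarrow> 'a::real_normed_vector"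
  assumes "(G has_integral I) {0..1}"
  shows "((\<lambda>x. G (2 - 2 * x)) has_integral I /\<^sub>R 2) {1/2..1}"
proof -
  have "(\<lambda>x::real. (1 / -2) *\<^sub>R x + - ((1 / -2) *\<^sub>R 2)) ` {0..1} = {1/2..1}"
    using image_affinity_atLeastAtMost[of "-1/2" 1 0 1] by simp
  then show ?thesis
    using has_integral_affinity[of G I 0 1 "-2" 2] assms by (simp add: algebra_simps)
qed

definition tent_transfer :: "(real \<Rightarrow> real) \<Rightarrow> real \<Rightarrow> real" where
  "tent_transfer q y = (q (y/2) + q (1 - y/2)) / 2"

lemma tent_transfer_quadratic:
  "tent_transfer (\<lambda>x. a * x\<^sup>2 + b * x + c) = (\<lambda>y. (a/4) * y\<^sup>2 + (-a/2) * y + (a/2 + b/2 + c))"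
  by (simp add: tent_transfer_def fun_eq_iff power2_eq_square field_simps)

lemma integral_mult_comp_tent:
  fixes q F :: "real \<Rightarrow> real"
  assumes q: "continuous_on {0..1} q" and F: "continuous_on {0..1} F"
  shows "integral {0..1} (\<lambda>x. q x * F (tent x)) = integral {0..1} (\<lambda>y. tent_transfer q y * F y)"
proof -
  define G1 where "G1 y = q (y/2) * F y" for y
  define G2 where "G2 y = q (1 - y/2) * F y" for y
  have "continuous_on {0..1} G1" "continuous_on {0..1} G2"
    unfolding G1_def G2_def
    by (auto intro!: continuous_intros continuous_on_compose2[OF q] F)
  then have G1: "(G1 has_integral integral {0..1} G1) {0..1}"
    and G2: "(G2 has_integral integral {0..1} G2) {0..1}"
    by (auto intro: integrable_continuous_real)
  have "((\<lambda>x. q x * F (tent x)) has_integral integral {0..1} G1 /\<^sub>R 2) {0..1/2}"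
    by (rule has_integral_eq[OF _ has_integral_comp_double[OF G1]])
       (simp_all add: G1_def tent_eq_double)
  moreover have "((\<lambda>x. q x * F (tent x)) has_integral integral {0..1} G2 /\<^sub>R 2) {1/2..1}"
    by (rule has_integral_eq[OF _ has_integral_comp_reflected_double[OF G2]])
       (simp_all add: G2_def tent_eq_reflected_double diff_divide_distrib)
  ultimately have "((\<lambda>x. q x * F (tent x)) has_integral
      integral {0..1} G1 /\<^sub>R 2 + integral {0..1} G2 /\<^sub>R 2) {0..1}"
    by (rule has_integral_combine[rotated 2]) auto
  moreover have "((\<lambda>y. tent_transfer q y * F y) has_integral
      integral {0..1} G1 /\<^sub>R 2 + integral {0..1} G2 /\<^sub>R 2) {0..1}"
    using has_integral_add[OF has_integral_cmul[OF G1] has_integral_cmul[OF G2], of "1/2" "1/2"]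
    by (simp add: tent_transfer_def G1_def G2_def field_simps)
  ultimately show ?thesis
    by (metis integral_unique)
qed

lemma integral_comp_funpow_tent:
  fixes H :: "real \<Rightarrow> real"
  assumes H: "continuous_on {0..1} H"
  shows "integral {0..1} (\<lambda>x. H ((tent ^^ n) x)) = integral {0..1} H"
proof (induction n)
  case (Suc n)
  have "continuous_on {0..1} (\<lambda>y. H ((tent ^^ n) y))"
    by (rule continuous_on_compose2[OF H continuous_on_funpow_tent])
       (auto intro: funpow_tent_in_unit_interval)
  then have "integral {0..1} (\<lambda>x. 1 * H ((tent ^^ n) (tent x)))
      = integral {0..1} (\<lambda>y. tent_transfer (\<lambda>_. 1) y * H ((tent ^^ n) y))"
    by (rule integral_mult_comp_tent[OF continuous_on_const])
  then show ?case
    using Suc by (simp add: funpow_Suc_right tent_transfer_def del: funpow.simps)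
qed simp

lemma integral_quadratic_mult_centered_sq:
  "integral {0..1} (\<lambda>x::real. (a * x\<^sup>2 + b * x + c) * (x - 1/2)\<^sup>2)
     = (a/3 + b/2 + c) / 12 + a/180"
proof -
  define P where "P x = a*x^5/5 + (b-a)*x^4/4 + (a/4-b+c)*x^3/3 + (b/4-c)*x^2/2 + c*x/4"
    for x :: real
  have "((\<lambda>x. (a * x\<^sup>2 + b * x + c) * (x - 1/2)\<^sup>2) has_integral P 1 - P 0) {0..1}"
  proof (rule fundamental_theorem_of_calculus)
    fix x :: real
    have "(P has_real_derivative (a * x\<^sup>2 + b * x + c) * (x - 1/2)\<^sup>2) (at x within {0..1})"
      unfolding P_def [abs_def]
      by (rule derivative_eq_intros refl | simp)+
         (simp add: power2_eq_square power3_eq_cube algebra_simps eval_nat_numeral)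
    then show "(P has_vector_derivative (a * x\<^sup>2 + b * x + c) * (x - 1/2)\<^sup>2) (at x within {0..1})"
      by (simp add: has_real_derivative_iff_has_vector_derivative)
  qed simp
  then have "integral {0..1} (\<lambda>x. (a * x\<^sup>2 + b * x + c) * (x - 1/2)\<^sup>2) = P 1 - P 0"
    by (rule integral_unique)
  also have "P 1 - P 0 = (a/3 + b/2 + c) / 12 + a/180"
    by (simp add: P_def field_simps)
  finally show ?thesis .
qed

lemma integral_quadratic_mult_centered_funpow_tent_sq:
  "integral {0..1} (\<lambda>x. (a * x\<^sup>2 + b * x + c) * ((tent ^^ k) x - 1/2)\<^sup>2)
     = (a/3 + b/2 + c) / 12 + a / (180 * 4 ^ k)"
proof (induction k arbitrary: a b c)
  case 0
  show ?case
    using integral_quadratic_mult_centered_sq by simp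
next
  case (Suc k)
  have "integral {0..1} (\<lambda>x. (a * x\<^sup>2 + b * x + c) * ((tent ^^ k) (tent x) - 1/2)\<^sup>2)
      = integral {0..1} (\<lambda>y. tent_transfer (\<lambda>x. a * x\<^sup>2 + b * x + c) y * ((tent ^^ k) y - 1/2)\<^sup>2)"
    by (rule integral_mult_comp_tent) (intro continuous_intros continuous_on_funpow_tent)+
  also have "\<dots> = integral {0..1} (\<lambda>y. ((a/4) * y\<^sup>2 + (-a/2) * y + (a/2 + b/2 + c)) * ((tent ^^ k) y - 1/2)\<^sup>2)"
    unfolding tent_transfer_quadratic ..
  also have "\<dots> = ((a/4)/3 + (-a/2)/2 + (a/2 + b/2 + c)) / 12 + (a/4) / (180 * 4 ^ k)"
    by (rule Suc)
  finally show ?case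
    by (simp add: funpow_Suc_right field_simps del: funpow.simps)
qed

theorem lemma2p6:
  fixes i j :: nat
  assumes "0 < i" and "i < j"
  shows "Ex (\<lambda>x. (tent_c i x)\<^sup>2 * (tent_c j x)\<^sup>2)
           - Ex (\<lambda>x. (tent_c i x)\<^sup>2) * Ex (\<lambda>x. (tent_c j x)\<^sup>2)
         = 1 / 180 * (1 / 4 ^ (j - i))"
proof -
  define k where "k = j - i"
  have j: "j = k + i"
    using assms k_def by simp
  have second_moment: "Ex (\<lambda>x. (tent_c n x)\<^sup>2) = 1/12" for n
    using integral_quadratic_mult_centered_funpow_tent_sq[of 0 0 1 n]
    by (simp add: Ex_def tent_c_def tent_iter_def)
  define H where "H y = (y - 1/2)\<^sup>2 * ((tent ^^ k) y - 1/2)\<^sup>2" for y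
  have "continuous_on {0..1} H"
    unfolding H_def by (intro continuous_intros continuous_on_funpow_tent)
  have "Ex (\<lambda>x. (tent_c i x)\<^sup>2 * (tent_c j x)\<^sup>2) = integral {0..1} (\<lambda>x. H ((tent ^^ i) x))"
    by (simp add: Ex_def tent_c_def tent_iter_def H_def j funpow_add)
  also have "\<dots> = integral {0..1} H"
    by (rule integral_comp_funpow_tent) fact
  also have "\<dots> = integral {0..1} (\<lambda>x. (1 * x\<^sup>2 + (-1) * x + 1/4) * ((tent ^^ k) x - 1/2)\<^sup>2)"
    unfolding H_def by (rule integral_cong) (simp add: power2_eq_square algebra_simps)
  also have "\<dots> = 1/144 + 1 / (180 * 4 ^ k)"
    by (subst integral_quadratic_mult_centered_funpow_tent_sq) simp
  finally show ?thesis
    by (simp add: second_moment k_def)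
qed

end
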